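(* Let $X\in\mathbb{R}^{n\times p}$ and $\Psi=\frac1nX^\top X$ satisfy $\Psi_{jj}=1$ and $\max_{j'\ne j}|\Psi_{jj'}|\le\frac{1}{7\alpha s}$ for all $j\in[p]$, for some integer $s\ge1$ and some $\alpha>1$. Let $B^*\in\mathbb{R}^{p\times q}$ with row support $\mathcal S^*=\{j:\|B^*_{j:}\|_2\ne0\}$ satisfying $|\mathcal S^*|\le s$, and let $\hat B\in\mathbb{R}^{p\times q}$ be such that $\Delta=\hat B-B^*$ satisfies $\|\Delta_{\mathcal S^{*c}}\|_{2,1}\le3\|\Delta_{\mathcal S^*}\|_{2,1}$. Then (a) $\|\Delta_{\mathcal S^*}\|_F\le\frac{\alpha}{\alpha-1}4\sqrt s\,\|\Psi\Delta\|_{2,\infty}$; (b) $\|\Delta\|_{2,1}\le\frac{\alpha}{\alpha-1}16s\,\|\Psi\Delta\|_{2,\infty}$; (c) $\|\Delta\|_{2,\infty}\le\Big(1+\frac{16}{7(\alpha-1)}\Big)\|\Psi\Delta\|_{2,\infty}$.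
   Context: $M_{j:}$ is the $j$-th row of $M$; $\|M\|_{2,1}=\sum_j\|M_{j:}\|_2$, $\|M\|_{2,\infty}=\max_j\|M_{j:}\|_2$, $\|\cdot\|_F$ Frobenius norm. For $\mathcal S\subset[p]$, $M_{\mathcal S}$ equals $M$ on rows indexed by $\mathcal S$ and is zero elsewhere; $\mathcal S^{*c}=[p]\setminus\mathcal S^*$. *)

theory Defs
  imports "HOL-Analysis.Analysis"
begin

(* Matrices are functions nat => nat => real; a p x q matrix M uses entries M j k, j < p, k < q. *)

definition row_norm :: "nat \<Rightarrow> (nat \<Rightarrow> nat \<Rightarrow> real) \<Rightarrow> nat \<Rightarrow> real" where
  "row_norm q M j = sqrt (\<Sum>k<q. (M j k)^2)"

definition norm21 :: "nat \<Rightarrow> nat \<Rightarrow> (nat \<Rightarrow> nat \<Rightarrow> real) \<Rightarrow> real" where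
  "norm21 p q M = (\<Sum>j<p. row_norm q M j)"

definition norm2inf :: "nat \<Rightarrow> nat \<Rightarrow> (nat \<Rightarrow> nat \<Rightarrow> real) \<Rightarrow> real" where
  "norm2inf p q M = Max (insert 0 (row_norm q M ` {..<p}))"

definition frob :: "nat \<Rightarrow> nat \<Rightarrow> (nat \<Rightarrow> nat \<Rightarrow> real) \<Rightarrow> real" where
  "frob p q M = sqrt (\<Sum>j<p. \<Sum>k<q. (M j k)^2)"

definition restr_rows :: "nat set \<Rightarrow> (nat \<Rightarrow> nat \<Rightarrow> real) \<Rightarrow> nat \<Rightarrow> nat \<Rightarrow> real" where
  "restr_rows S M = (\<lambda>j k. if j \<in> S then M j k else 0)"

definition mat_mul :: "nat \<Rightarrow> (nat \<Rightarrow> nat \<Rightarrow> real) \<Rightarrow> (nat \<Rightarrow> nat \<Rightarrow> real) \<Rightarrow> nat \<Rightarrow> nat \<Rightarrow> real" where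
  "mat_mul m A M = (\<lambda>i k. \<Sum>l<m. A i l * M l k)"

definition gram :: "nat \<Rightarrow> (nat \<Rightarrow> nat \<Rightarrow> real) \<Rightarrow> nat \<Rightarrow> nat \<Rightarrow> real" where
  "gram n X = (\<lambda>j j'. (1 / real n) * (\<Sum>i<n. X i j * X i j'))"

end

theory Submission
  imports Defs
begin

(* With g = \<parallel>\<Psi>\<Delta>\<parallel>_{2,\<infinity>} and \<mu> = 1/(7\<alpha>s) the incoherence bound, the unit diagonal of \<Psi>
   gives \<Delta>_j = (\<Psi>\<Delta>)_j - \<Sum>_{l \<noteq> j} \<Psi>_jl \<Delta>_l, so every row of \<Delta> has norm at most
   g + \<mu> \<parallel>\<Delta>\<parallel>_{2,1}.  Summing this over the at most s rows of S* and using the cone condition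
   \<parallel>\<Delta>\<parallel>_{2,1} \<le> 4 \<parallel>\<Delta>_S*\<parallel>_{2,1} gives \<parallel>\<Delta>\<parallel>_{2,1} \<le> 4 (s g + \<parallel>\<Delta>\<parallel>_{2,1} / (7\<alpha>)), hence (b).
   Feeding (b) back into the row bound gives (c), and (a) follows because the Frobenius norm
   of at most s rows is at most sqrt s times their largest norm. *)

lemma row_norm_eq_L2_set: "row_norm q M j = L2_set (M j) {..<q}"
  by (simp add: row_norm_def L2_set_def)

lemma row_norm_nonneg: "0 \<le> row_norm q M j"
  by (simp add: row_norm_eq_L2_set)

lemma row_norm_restr_rows:
  "row_norm q (restr_rows S M) j = (if j \<in> S then row_norm q M j else 0)"
  by (simp add: row_norm_def restr_rows_def)

lemma L2_set_cmult: "L2_set (\<lambda>k. c * f k) A = \<bar>c\<bar> * L2_set f A"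
proof -
  have "L2_set (\<lambda>k. c * f k) A = L2_set (\<lambda>k. \<bar>c\<bar> * f k) A"
    unfolding L2_set_def by (simp add: power_mult_distrib)
  also have "\<dots> = \<bar>c\<bar> * L2_set f A"
    by (simp add: L2_set_right_distrib)
  finally show ?thesis .
qed

lemma L2_set_sum_le:
  assumes "finite L"
  shows "L2_set (\<lambda>k. \<Sum>l\<in>L. h l k) A \<le> (\<Sum>l\<in>L. L2_set (h l) A)"
  using assms
proof (induction L rule: finite_induct)
  case empty
  then show ?case by (simp add: L2_set_def)
next
  case (insert x F)
  have "L2_set (\<lambda>k. \<Sum>l\<in>insert x F. h l k) A = L2_set (\<lambda>k. h x k + (\<Sum>l\<in>F. h l k)) A"
    using insert by simp
  also have "\<dots> \<le> L2_set (h x) A + L2_set (\<lambda>k. \<Sum>l\<in>F. h l k) A"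
    by (rule L2_set_triangle_ineq)
  also have "\<dots> \<le> L2_set (h x) A + (\<Sum>l\<in>F. L2_set (h l) A)"
    using insert by simp
  finally show ?case
    using insert by simp
qed

lemma row_norm_le_norm2inf: "j < p \<Longrightarrow> row_norm q M j \<le> norm2inf p q M"
  unfolding norm2inf_def by (rule Max_ge) auto

lemma norm2inf_nonneg: "0 \<le> norm2inf p q M"
  unfolding norm2inf_def by (rule Max_ge_iff[THEN iffD2]) auto

lemma norm2inf_leI:
  "0 \<le> c \<Longrightarrow> (\<And>j. j < p \<Longrightarrow> row_norm q M j \<le> c) \<Longrightarrow> norm2inf p q M \<le> c"
  unfolding norm2inf_def by (subst Max_le_iff) auto

lemma norm21_restr_rows:
  "S \<subseteq> {..<p} \<Longrightarrow> norm21 p q (restr_rows S M) = (\<Sum>j\<in>S. row_norm q M j)"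
  unfolding norm21_def row_norm_restr_rows
  by (simp add: sum.If_cases Int_absorb1 flip: sum.inter_filter)

lemma norm21_split_rows:
  "norm21 p q M = norm21 p q (restr_rows ({..<p} - S) M) + norm21 p q (restr_rows S M)"
  unfolding norm21_def row_norm_restr_rows sum.distrib[symmetric]
  by (rule sum.cong) auto

lemma frob_restr_rows:
  assumes "S \<subseteq> {..<p}"
  shows "frob p q (restr_rows S M) = L2_set (row_norm q M) S"
proof -
  have "frob p q (restr_rows S M) = L2_set (row_norm q (restr_rows S M)) {..<p}"
    by (simp add: frob_def L2_set_def row_norm_def sum_nonneg)
  also have "\<dots> = L2_set (row_norm q M) S"
    using assms unfolding L2_set_def row_norm_restr_rows
    by (simp add: if_distrib[of power2] sum.If_cases Int_absorb1)
  finally show ?thesis .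
qed

lemma frob_restr_rows_le:
  assumes "S \<subseteq> {..<p}" and "0 \<le> c" and "\<And>j. j \<in> S \<Longrightarrow> row_norm q M j \<le> c"
  shows "frob p q (restr_rows S M) \<le> sqrt (card S) * c"
proof -
  have "L2_set (row_norm q M) S \<le> L2_set (\<lambda>_. c) S"
    using assms(3) by (intro L2_set_mono) (auto simp: row_norm_nonneg)
  then show ?thesis
    using assms(1,2) by (simp add: frob_restr_rows L2_set_constant)
qed

lemma row_norm_le_unit_diagonal:
  assumes j: "j < p" and diag: "A j j = 1" and "0 \<le> \<mu>"
    and offdiag: "\<And>l. l < p \<Longrightarrow> l \<noteq> j \<Longrightarrow> \<bar>A j l\<bar> \<le> \<mu>"
  shows "row_norm q M j \<le> row_norm q (mat_mul p A M) j + \<mu> * norm21 p q M"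
proof -
  let ?L = "{..<p} - {j}"
  have "mat_mul p A M j k = M j k + (\<Sum>l\<in>?L. A j l * M l k)" for k
    unfolding mat_mul_def using j diag by (subst sum.remove[of _ j]) auto
  then have row: "M j = (\<lambda>k. mat_mul p A M j k + (\<Sum>l\<in>?L. - A j l * M l k))"
    by (auto simp: sum_negf)
  have "row_norm q M j
      \<le> row_norm q (mat_mul p A M) j + L2_set (\<lambda>k. \<Sum>l\<in>?L. - A j l * M l k) {..<q}"
    unfolding row_norm_eq_L2_set by (subst row) (rule L2_set_triangle_ineq)
  also have "L2_set (\<lambda>k. \<Sum>l\<in>?L. - A j l * M l k) {..<q}
      \<le> (\<Sum>l\<in>?L. L2_set (\<lambda>k. - A j l * M l k) {..<q})"
    by (rule L2_set_sum_le) simp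
  also have "\<dots> = (\<Sum>l\<in>?L. \<bar>A j l\<bar> * row_norm q M l)"
    by (simp only: L2_set_cmult abs_minus_cancel row_norm_eq_L2_set)
  also have "\<dots> \<le> (\<Sum>l\<in>?L. \<mu> * row_norm q M l)"
    using offdiag by (intro sum_mono mult_right_mono) (auto simp: row_norm_nonneg)
  also have "\<dots> \<le> (\<Sum>l<p. \<mu> * row_norm q M l)"
    using \<open>0 \<le> \<mu>\<close> by (intro sum_mono2) (auto simp: row_norm_nonneg)
  also have "\<dots> = \<mu> * norm21 p q M"
    by (simp add: norm21_def sum_distrib_left)
  finally show ?thesis by simp
qed

lemma self_bounded_le:
  fixes \<alpha> c N :: real
  assumes "\<alpha> > 1" and "0 \<le> c" and "N \<le> 4 * (c + N / (7 * \<alpha>))"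
  shows "N \<le> \<alpha> / (\<alpha> - 1) * 16 * c"
proof -
  have "N * (7 * \<alpha> - 4) \<le> 28 * \<alpha> * c"
    using assms(1,3) by (simp add: field_simps)
  then have "N \<le> 28 * \<alpha> / (7 * \<alpha> - 4) * c"
    using assms(1) by (simp add: pos_le_divide_eq)
  also have "\<dots> \<le> \<alpha> / (\<alpha> - 1) * 16 * c"
    using assms(1,2) by (intro mult_right_mono) (simp_all add: divide_simps)
  finally show ?thesis .
qed

lemma norm21_le_of_row_bound:
  fixes \<alpha> g :: real
  assumes S_sub: "S \<subseteq> {..<p}" and card_S: "card S \<le> s" and "1 \<le> s"
    and "\<alpha> > 1" and "0 \<le> g"
    and rows: "\<And>j. j < p \<Longrightarrow> row_norm q M j \<le> g + norm21 p q M / (7 * \<alpha> * s)"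
    and cone: "norm21 p q (restr_rows ({..<p} - S) M) \<le> 3 * norm21 p q (restr_rows S M)"
  shows "norm21 p q M \<le> \<alpha> / (\<alpha> - 1) * 16 * s * g"
proof -
  let ?N = "norm21 p q M"
  have bound_nonneg: "0 \<le> g + ?N / (7 * \<alpha> * s)"
    using assms(4,5) by (simp add: norm21_def sum_nonneg row_norm_nonneg)
  have "norm21 p q (restr_rows S M) \<le> card S * (g + ?N / (7 * \<alpha> * s))"
    unfolding norm21_restr_rows[OF S_sub] using rows S_sub by (intro sum_bounded_above) auto
  also have "\<dots> \<le> s * (g + ?N / (7 * \<alpha> * s))"
    using card_S bound_nonneg by (intro mult_right_mono) simp_all
  also have "\<dots> = s * g + ?N / (7 * \<alpha>)"
    using assms(3) by (simp add: algebra_simps)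
  finally have support_bound: "norm21 p q (restr_rows S M) \<le> s * g + ?N / (7 * \<alpha>)" .
  have "?N \<le> 4 * norm21 p q (restr_rows S M)"
    using cone norm21_split_rows[of p q M S] by linarith
  also have "\<dots> \<le> 4 * (s * g + ?N / (7 * \<alpha>))"
    using support_bound by simp
  finally show ?thesis
    using self_bounded_le[of \<alpha> "s * g" ?N] assms(4,5) by (simp add: mult.assoc)
qed

lemma incoherence_coefficient_le:
  fixes \<alpha> :: real
  assumes "\<alpha> > 1"
  shows "1 + 16 / (7 * (\<alpha> - 1)) \<le> \<alpha> / (\<alpha> - 1) * 4"
proof -
  have "1 + 16 / (7 * (\<alpha> - 1)) = (7 * \<alpha> + 9) / (7 * (\<alpha> - 1))"
    using assms by (simp add: field_simps)
  also have "\<dots> \<le> 28 * \<alpha> / (7 * (\<alpha> - 1))"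
    using assms by (intro divide_right_mono) simp_all
  also have "\<dots> = \<alpha> / (\<alpha> - 1) * 4"
    using assms by (simp add: field_simps)
  finally show ?thesis .
qed

theorem lemma4:
  fixes n p q s :: nat and \<alpha> :: real
    and X B B_hat :: "nat \<Rightarrow> nat \<Rightarrow> real"
  defines "\<Psi> \<equiv> gram n X"
    and "\<Delta> \<equiv> (\<lambda>j k. B_hat j k - B j k)"
    and "S \<equiv> {j. j < p \<and> row_norm q B j \<noteq> 0}"
  assumes diag: "\<forall>j<p. \<Psi> j j = 1"
    and incoh: "\<forall>j<p. \<forall>j'<p. j' \<noteq> j \<longrightarrow> \<bar>\<Psi> j j'\<bar> \<le> 1 / (7 * \<alpha> * real s)"
    and s_ge: "s \<ge> 1"
    and alpha_gt: "\<alpha> > 1"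
    and card_S: "card S \<le> s"
    and cone: "norm21 p q (restr_rows ({..<p} - S) \<Delta>) \<le> 3 * norm21 p q (restr_rows S \<Delta>)"
  shows "frob p q (restr_rows S \<Delta>)
           \<le> \<alpha> / (\<alpha> - 1) * 4 * sqrt (real s) * norm2inf p q (mat_mul p \<Psi> \<Delta>)
       \<and> norm21 p q \<Delta> \<le> \<alpha> / (\<alpha> - 1) * 16 * real s * norm2inf p q (mat_mul p \<Psi> \<Delta>)
       \<and> norm2inf p q \<Delta> \<le> (1 + 16 / (7 * (\<alpha> - 1))) * norm2inf p q (mat_mul p \<Psi> \<Delta>)"
proof -
  define g where "g = norm2inf p q (mat_mul p \<Psi> \<Delta>)"
  define N where "N = norm21 p q \<Delta>"
  have g0: "0 \<le> g" and N0: "0 \<le> N"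
    by (simp_all add: g_def norm2inf_nonneg N_def norm21_def sum_nonneg row_norm_nonneg)
  have S_sub: "S \<subseteq> {..<p}"
    by (auto simp: S_def)
  have rows: "row_norm q \<Delta> j \<le> g + N / (7 * \<alpha> * s)" if "j < p" for j
  proof -
    have "row_norm q \<Delta> j \<le> row_norm q (mat_mul p \<Psi> \<Delta>) j + 1 / (7 * \<alpha> * s) * N"
      unfolding N_def using that diag incoh alpha_gt by (intro row_norm_le_unit_diagonal) auto
    then show ?thesis
      using row_norm_le_norm2inf[OF that, of q "mat_mul p \<Psi> \<Delta>"] unfolding g_def by simp
  qed
  have b: "N \<le> \<alpha> / (\<alpha> - 1) * 16 * s * g"
    using S_sub card_S s_ge alpha_gt g0 rows cone unfolding N_def
    by (intro norm21_le_of_row_bound) auto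
  have "N / (7 * \<alpha> * s) \<le> \<alpha> / (\<alpha> - 1) * 16 * s * g / (7 * \<alpha> * s)"
    using b alpha_gt by (intro divide_right_mono) auto
  also have "\<dots> = 16 / (7 * (\<alpha> - 1)) * g"
    using s_ge alpha_gt by (simp add: field_simps)
  finally have r: "g + N / (7 * \<alpha> * s) \<le> (1 + 16 / (7 * (\<alpha> - 1))) * g"
    by (simp add: algebra_simps)
  have "frob p q (restr_rows S \<Delta>) \<le> sqrt (card S) * (g + N / (7 * \<alpha> * s))"
    using rows S_sub g0 N0 alpha_gt by (intro frob_restr_rows_le) auto
  also have "\<dots> \<le> sqrt s * (\<alpha> / (\<alpha> - 1) * 4 * g)"
    using card_S g0 N0 alpha_gt r mult_right_mono[OF incoherence_coefficient_le[OF alpha_gt] g0]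
    by (intro mult_mono) auto
  finally have a: "frob p q (restr_rows S \<Delta>) \<le> \<alpha> / (\<alpha> - 1) * 4 * sqrt s * g"
    by (simp add: mult_ac)
  have c: "norm2inf p q \<Delta> \<le> (1 + 16 / (7 * (\<alpha> - 1))) * g"
    using rows r g0 alpha_gt by (intro norm2inf_leI) (auto intro: order_trans)
  show ?thesis
    using a b c unfolding g_def N_def by blast
qed

end
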